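(* Let $N \ge 1$ and let $W_N$ be the set of binary words of length $N$. Define $\varphi_4 : W_N \to W_N$ by $\varphi_4(u) = v\, 01100\, v'$ if $u = v\, 01010\, v'$ where $v, v'$ are (possibly empty) words such that the word $v010$ does not contain $01010$ as a contiguous subword; and $\varphi_4(u) = u$ otherwise. Then $|P(\varphi_4(u))| \leq |P(u)|$ for every $u \in W_N$.
   Context: Juxtaposition denotes concatenation. For a binary word $w = w_1 \cdots w_\ell$ of length $\ell$, $P(w)$ is the set of indices $i \geq 2$ such that at least one of the following holds: (i) $\ell \geq i$ and $w_{i-1} w_i = 00$; (ii) $\ell \geq i+2$ and $w_{i-1} w_i w_{i+1} w_{i+2} = 0100$; (iii) $\ell \geq i+3$ and $w_{i-1} \cdots w_{i+3} = 01010$. *)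

theory Defs
  imports Main "HOL-Library.Sublist"
begin

(* Binary words are lists of naturals with entries in {0,1}.
   Letters are 1-indexed as in the paper: w_j = w ! (j - 1). *)

definition P :: "nat list \<Rightarrow> nat set" where
  "P w = {i. 2 \<le> i \<and>
     ((length w \<ge> i \<and> w ! (i-2) = 0 \<and> w ! (i-1) = 0)
    \<or> (length w \<ge> i + 2 \<and> w ! (i-2) = 0 \<and> w ! (i-1) = 1 \<and> w ! i = 0 \<and> w ! (i+1) = 0)
    \<or> (length w \<ge> i + 3 \<and> w ! (i-2) = 0 \<and> w ! (i-1) = 1 \<and> w ! i = 0
          \<and> w ! (i+1) = 1 \<and> w ! (i+2) = 0))}"

definition phi4_split :: "nat list \<Rightarrow> nat list \<Rightarrow> nat list \<Rightarrow> bool" where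
  "phi4_split u v v' \<longleftrightarrow> u = v @ [0,1,0,1,0] @ v' \<and> \<not> sublist [0,1,0,1,0] (v @ [0,1,0])"

definition phi4 :: "nat list \<Rightarrow> nat list" where
  "phi4 u = (if \<exists>v v'. phi4_split u v v'
             then (SOME w. \<exists>v v'. phi4_split u v v' \<and> w = v @ [0,1,1,0,0] @ v')
             else u)"

end

theory Submission
  imports Defs
begin

text \<open>
  Replacing the factor 01010 (letters k+1, ..., k+5, with k = |v|) by 01100 changes only the
  letters k+3 and k+4, and membership of i in P depends only on the letters i-1, ..., i+3.
  Checking the few indices whose window meets the change shows that the index k+2, witnessed
  by 01010 itself, is lost, and at most the index k+5, witnessed by the new factor 00, is
  gained.
\<close>

lemma finite_P: "finite (P w)"
  by (rule finite_subset[of _ "{..length w}"]) (auto simp: P_def)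

lemma P_cong:
  assumes "length w = length u"
    and "\<And>j. i - 2 \<le> j \<Longrightarrow> j \<le> i + 2 \<Longrightarrow> j < length u \<Longrightarrow> w ! j = u ! j"
  shows "i \<in> P w \<longleftrightarrow> i \<in> P u"
proof -
  have "w ! (i - 2) = u ! (i - 2)" "w ! (i - 1) = u ! (i - 1)" if "2 \<le> i" "i \<le> length u"
    using that assms(2) by auto
  moreover have "w ! i = u ! i" "w ! (i + 1) = u ! (i + 1)" if "i + 2 \<le> length u"
    using that assms(2) by auto
  moreover have "w ! (i + 2) = u ! (i + 2)" if "i + 3 \<le> length u"
    using that assms(2) by auto
  ultimately show ?thesis
    unfolding P_def using assms(1) by auto
qed

lemma card_le_of_subset_insert_Diff:
  assumes "finite A" and "a \<in> A" and "B \<subseteq> insert b (A - {a})"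
  shows "card B \<le> card A"
proof -
  have "card B \<le> card (insert b (A - {a}))"
    using assms by (intro card_mono) auto
  also have "\<dots> \<le> Suc (card (A - {a}))"
    using assms(1) by (simp add: card_insert_if)
  also have "\<dots> = card A"
    using assms(1,2) by (rule card_Suc_Diff1)
  finally show ?thesis .
qed

lemma replace_01010_by_01100:
  "v @ [0,1,1,0,0] @ v' = (v @ [0,1,0,1,0] @ v')[length v + 2 := 1, length v + 3 := 0]"
  by (simp add: list_update_append)

lemma P_replace_01010_by_01100:
  fixes v v' :: "nat list"
  defines "u \<equiv> v @ [0,1,0,1,0] @ v'" and "k \<equiv> length v"
  shows "P (v @ [0,1,1,0,0] @ v') \<subseteq> insert (k + 5) (P u - {k + 2})"
proof
  define w where "w = v @ [0,1,1,0,0] @ v'"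
  have w_upd: "w = u[k + 2 := 1, k + 3 := 0]"
    unfolding w_def u_def k_def by (rule replace_01010_by_01100)
  have len: "length w = length u" "k + 5 \<le> length u"
    unfolding w_upd by (auto simp: u_def k_def)
  have agree: "w ! j = u ! j" if "j \<noteq> k + 2" "j \<noteq> k + 3" for j
    using that unfolding w_upd by simp
  have u_block: "u ! k = 0" "u ! (k + 1) = 1" "u ! (k + 2) = 0" "u ! (k + 3) = 1" "u ! (k + 4) = 0"
    unfolding u_def k_def by (auto simp: nth_append)
  have w_block: "w ! k = 0" "w ! (k + 1) = 1" "w ! (k + 2) = 1" "w ! (k + 3) = 0" "w ! (k + 4) = 0"
    using u_block len unfolding w_upd by auto
  fix i
  assume "i \<in> P (v @ [0,1,1,0,0] @ v')"
  hence iw: "i \<in> P w" by (simp add: w_def)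
  hence "2 \<le> i" by (simp add: P_def)
  consider "i + 2 < k + 2 \<or> k + 6 \<le> i" | "i = k \<or> i = k + 1" | "i = k + 2 \<or> i = k + 3 \<or> i = k + 4"
    | "i = k + 5" by linarith
  then show "i \<in> insert (k + 5) (P u - {k + 2})"
  proof cases
    case 1
    hence "i \<in> P u" using iw P_cong[of w u i] len agree by auto
    moreover have "i \<noteq> k + 2" using 1 by linarith
    ultimately show ?thesis by simp
  next
    case 2
    \<comment> \<open>Only the clauses 00 and 0100 can hold at these indices, and they read no changed letter.\<close>
    have "w ! (i - 2) = u ! (i - 2)" "w ! (i - 1) = u ! (i - 1)"
      using 2 \<open>2 \<le> i\<close> agree by auto
    hence "i \<in> P u" using iw 2 len u_block w_block unfolding P_def by auto
    thus ?thesis using 2 by auto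
  next
    case 3
    hence False using iw len w_block unfolding P_def by auto
    thus ?thesis ..
  qed simp
qed

lemma P_01010: "length v + 2 \<in> P (v @ [0,1,0,1,0] @ v')"
  by (simp add: P_def nth_append)

lemma card_P_replace_01010_by_01100:
  "card (P (v @ [0,1,1,0,0] @ v')) \<le> card (P (v @ [0,1,0,1,0] @ v'))"
  using finite_P P_01010 P_replace_01010_by_01100 by (rule card_le_of_subset_insert_Diff)

lemma phi4_cases:
  "phi4 u = u \<or> (\<exists>v v'. u = v @ [0,1,0,1,0] @ v' \<and> phi4 u = v @ [0,1,1,0,0] @ v')"
proof (cases "\<exists>v v'. phi4_split u v v'")
  case True
  hence "\<exists>w v v'. phi4_split u v v' \<and> w = v @ [0,1,1,0,0] @ v'" by blast
  from someI_ex[OF this] obtain v v' where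
    "phi4_split u v v'" "phi4 u = v @ [0,1,1,0,0] @ v'"
    using True unfolding phi4_def by auto
  thus ?thesis unfolding phi4_split_def by blast
qed (simp add: phi4_def)

theorem lemma4p4:
  fixes N :: nat and u :: "nat list"
  assumes "N \<ge> 1" and "length u = N" and "set u \<subseteq> {0, 1}"
  shows "card (P (phi4 u)) \<le> card (P u)"
  using phi4_cases[of u] card_P_replace_01010_by_01100 by auto

end
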